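(* Let $\psi\in C_b(\mathbb{R})$, $u>0$, and $\eta>0$. Define \[ r_\eta(\theta):=\frac{\eta-\sqrt{\eta^2+4\sin^2\theta}}{2\sin\theta},\qquad E_\eta(\theta):=\Big(r_\eta(\theta)+\frac{1}{r_\eta(\theta)}\Big)\cos\theta,\qquad \theta\in(-\pi,0). \] Then \[ \int_{\mathbb{R}}\frac{1}{\pi}\operatorname{Im}\Big\{\frac{2u^2m(x+i\eta)m'(x+i\eta)}{1-u^2m^2(x+i\eta)}\Big\}\psi(x)\,\mathrm{d}x=-\frac{1}{\pi}\int_{-\pi}^0\psi\big(E_\eta(\theta)\big)\frac{\mathrm{d}}{\mathrm{d}\theta}\arg\big\{1-u^2r_\eta^2(\theta)e^{2i\theta}\big\}\,\mathrm{d}\theta. \]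
   Context: $m(z)=\frac{z-\sqrt{z^2-4}}{2}$ is the Stieltjes transform of the semicircle law on $[-2,2]$ (satisfying $m(z)=1/(z-m(z))$, $|m(z)|<1$ off the real line). $\arg$ denotes the principal argument with values in $(-\pi,\pi]$. $C_b(\mathbb{R})$ is the space of bounded continuous functions on $\mathbb{R}$. *)

theory Defs
  imports "HOL-Analysis.Analysis"
begin

text \<open>Stieltjes transform of the semicircle law, m(z) = (z - sqrt(z^2-4))/2, with the
branch of the square root chosen so that |m z| < 1 off the real line
(sqrt(z^2-4) realised as csqrt(z-2) * csqrt(z+2), cut along [-2,2]).\<close>
definition msc :: "complex \<Rightarrow> complex" where
  "msc z = (z - csqrt (z - 2) * csqrt (z + 2)) / 2"

definition r_eta :: "real \<Rightarrow> real \<Rightarrow> real" where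
  "r_eta \<eta> \<theta> = (\<eta> - sqrt (\<eta>\<^sup>2 + 4 * (sin \<theta>)\<^sup>2)) / (2 * sin \<theta>)"

definition E_eta :: "real \<Rightarrow> real \<Rightarrow> real" where
  "E_eta \<eta> \<theta> = (r_eta \<eta> \<theta> + 1 / r_eta \<eta> \<theta>) * cos \<theta>"

end

theory Submission
  imports Defs "HOL-Complex_Analysis.Complex_Analysis" "HOL-Real_Asymp.Real_Asymp"
begin

(* As \<theta> runs over (-pi, 0), E_eta \<eta> \<theta> increases from -\<infinity> to \<infinity>, and along the line
   Im z = \<eta> the Stieltjes transform has the polar form m(E_eta \<eta> \<theta> + i \<eta>) = r_eta \<eta> \<theta> e^{i \<theta>}:
   w = r e^{i \<theta>} and 1/w both solve m^2 - z m + 1 = 0 for z = w + 1/w, and the branch of the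
   square root in m selects w.  The integrand on the left is -(1/pi) Im (d/dz) log (1 - u^2 m(z)^2),
   so substituting x = E_eta \<eta> \<theta> and applying the chain rule turns it into
   -(1/pi) (d/d\<theta>) Im log (1 - u^2 r^2 e^{2 i \<theta>}); Im log is the principal argument, since
   1 - u^2 r^2 e^{2 i \<theta>} never lies on the closed negative real axis.  The substituted integrand
   is bounded by sup |\<psi>| times the derivative of the argument, which is continuous on [-pi, 0],
   and this integrability transfers to the left-hand side. *)

lemma sin_neg_of_neg_pi_lt: "-pi < t \<Longrightarrow> t < 0 \<Longrightarrow> sin t < 0"
  using sin_gt_zero[of "-t"] by simp

text \<open>\<open>r_eta \<eta> t\<close> is a root of \<open>sin t * r\<^sup>2 - \<eta> * r - sin t\<close>; this is the square root of its discriminant.\<close>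
definition sqrt_disc :: "real \<Rightarrow> real \<Rightarrow> real" where
  "sqrt_disc \<eta> t = sqrt (\<eta>\<^sup>2 + 4 * (sin t)\<^sup>2)"

lemma sqrt_disc_pos: "\<eta> > 0 \<Longrightarrow> sqrt_disc \<eta> t > 0"
  by (simp add: sqrt_disc_def add_pos_nonneg)

lemma sqrt_disc_squared: "(sqrt_disc \<eta> t)\<^sup>2 = \<eta>\<^sup>2 + 4 * (sin t)\<^sup>2"
  by (simp add: sqrt_disc_def)

lemma sqrt_disc_has_real_derivative:
  assumes "\<eta> > 0"
  shows "(sqrt_disc \<eta> has_real_derivative 4 * sin t * cos t / sqrt_disc \<eta> t) (at t)"
  unfolding sqrt_disc_def[abs_def]
  by (rule DERIV_cong[OF DERIV_chain2[OF DERIV_real_sqrt]])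
     (use assms in \<open>auto intro!: derivative_eq_intros simp: add_pos_nonneg field_simps\<close>)

lemma r_eta_altdef:
  assumes "\<eta> > 0"
  shows "r_eta \<eta> t = -2 * sin t / (\<eta> + sqrt_disc \<eta> t)"
proof (cases "sin t = 0")
  case False
  have "\<eta> + sqrt_disc \<eta> t > 0"
    using assms sqrt_disc_pos by (simp add: add_pos_pos)
  then show ?thesis
    using False by (simp add: r_eta_def sqrt_disc_def field_simps power2_eq_square)
qed (simp add: r_eta_def)

lemma r_eta_pos:
  assumes "\<eta> > 0" "sin t < 0"
  shows "r_eta \<eta> t > 0"
proof -
  have "\<eta> + sqrt_disc \<eta> t > 0"
    using assms sqrt_disc_pos[OF assms(1), of t] by simp
  with assms show ?thesis
    by (simp add: r_eta_altdef divide_neg_pos)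
qed

lemma
  assumes "\<eta> > 0" "sin t \<noteq> 0"
  shows r_eta_plus_inverse: "r_eta \<eta> t + 1 / r_eta \<eta> t = - sqrt_disc \<eta> t / sin t"
    and r_eta_minus_inverse: "r_eta \<eta> t - 1 / r_eta \<eta> t = \<eta> / sin t"
proof -
  have nz: "\<eta> + sqrt_disc \<eta> t \<noteq> 0" "sin t \<noteq> 0"
    using assms sqrt_disc_pos[OF assms(1), of t] by simp_all
  note q = sqrt_disc_squared[of \<eta> t]
  show "r_eta \<eta> t + 1 / r_eta \<eta> t = - sqrt_disc \<eta> t / sin t"
    using nz unfolding r_eta_altdef[OF assms(1)] by (simp add: divide_simps) (use q in algebra)
  show "r_eta \<eta> t - 1 / r_eta \<eta> t = \<eta> / sin t"
    using nz unfolding r_eta_altdef[OF assms(1)] by (simp add: divide_simps) (use q in algebra)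
qed

lemma r_eta_has_real_derivative:
  assumes "\<eta> > 0"
  shows "(r_eta \<eta> has_real_derivative
           -2 * \<eta> * cos t / (sqrt_disc \<eta> t * (\<eta> + sqrt_disc \<eta> t))) (at t)"
proof -
  have q: "sqrt_disc \<eta> t > 0" "\<eta> + sqrt_disc \<eta> t \<noteq> 0"
    using sqrt_disc_pos[OF assms, of t] assms by auto
  have r: "r_eta \<eta> = (\<lambda>t. -2 * sin t / (\<eta> + sqrt_disc \<eta> t))"
    using r_eta_altdef[OF assms] by auto
  show ?thesis
    unfolding r
    by (rule DERIV_cong[OF DERIV_divide[OF DERIV_cmult[OF DERIV_sin]
          DERIV_add[OF DERIV_const sqrt_disc_has_real_derivative[OF assms]]]])
       (use q in \<open>simp_all add: divide_simps\<close>, use sqrt_disc_squared[of \<eta> t] in algebra)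
qed

text \<open>Both sides vanish where \<open>sin t = 0\<close>, because \<open>x / 0 = 0\<close>.\<close>
lemma E_eta_altdef:
  assumes "\<eta> > 0"
  shows "E_eta \<eta> = (\<lambda>t. - cos t * sqrt_disc \<eta> t / sin t)"
proof
  fix t
  show "E_eta \<eta> t = - cos t * sqrt_disc \<eta> t / sin t"
    using r_eta_plus_inverse[OF assms] by (cases "sin t = 0") (simp_all add: E_eta_def r_eta_def)
qed

definition dE_eta :: "real \<Rightarrow> real \<Rightarrow> real" where
  "dE_eta \<eta> t = (\<eta>\<^sup>2 + 4 * (sin t)^4) / ((sin t)\<^sup>2 * sqrt_disc \<eta> t)"

lemma E_eta_has_real_derivative:
  assumes "\<eta> > 0" "sin t \<noteq> 0"
  shows "(E_eta \<eta> has_real_derivative dE_eta \<eta> t) (at t)"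
proof -
  have q: "sqrt_disc \<eta> t \<noteq> 0"
    using sqrt_disc_pos[OF assms(1), of t] by simp
  show ?thesis
    unfolding E_eta_altdef[OF assms(1)]
    by (rule DERIV_cong[OF DERIV_divide[OF DERIV_mult[OF DERIV_minus[OF DERIV_cos]
          sqrt_disc_has_real_derivative[OF assms(1)]] DERIV_sin]])
       (use assms(2) q in \<open>simp_all add: dE_eta_def divide_simps\<close>,
        use sqrt_disc_squared[of \<eta> t] sin_cos_squared_add[of t] in algebra)
qed

lemma dE_eta_nonneg: "\<eta> > 0 \<Longrightarrow> dE_eta \<eta> t \<ge> 0"
  using sqrt_disc_pos[of \<eta> t] by (simp add: dE_eta_def)

lemma isCont_dE_eta: "\<eta> > 0 \<Longrightarrow> sin t \<noteq> 0 \<Longrightarrow> isCont (dE_eta \<eta>) t"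
  unfolding dE_eta_def[abs_def] sqrt_disc_def
  by (intro continuous_intros) (auto simp: add_nonneg_eq_0_iff)

lemma E_eta_tendsto_bot:
  assumes "\<eta> > 0"
  shows "filterlim (E_eta \<eta>) at_bot (at_right (-pi))"
  unfolding E_eta_altdef[OF assms] sqrt_disc_def using assms by real_asymp

lemma E_eta_tendsto_top:
  assumes "\<eta> > 0"
  shows "filterlim (E_eta \<eta>) at_top (at_left 0)"
  unfolding E_eta_altdef[OF assms] sqrt_disc_def using assms by real_asymp

lemma csqrt_upper_half_plane:
  assumes "Im z > 0"
  shows "Re (csqrt z) > 0" "Im (csqrt z) > 0"
proof -
  have "\<bar>Re z\<bar> < cmod z"
  proof -
    have "\<bar>Re z\<bar> = sqrt ((Re z)\<^sup>2)" by simp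
    also have "\<dots> < sqrt ((Re z)\<^sup>2 + (Im z)\<^sup>2)" using assms by (intro real_sqrt_less_mono) simp
    finally show ?thesis by (simp add: cmod_def)
  qed
  then show "Re (csqrt z) > 0" "Im (csqrt z) > 0"
    using assms by auto
qed

lemma Im_csqrt_product_pos:
  assumes "Im z > 0"
  shows "Im (csqrt (z - 2) * csqrt (z + 2)) > 0"
  using csqrt_upper_half_plane[of "z - 2"] csqrt_upper_half_plane[of "z + 2"] assms
  by (simp add: add_pos_pos)

lemma msc_functional_eq: "msc z * (z - msc z) = 1"
proof -
  have minus: "csqrt (z - 2) * csqrt (z - 2) = z - 2"
    and plus: "csqrt (z + 2) * csqrt (z + 2) = z + 2"
    using power2_csqrt[of "z - 2"] power2_csqrt[of "z + 2"] by (simp_all only: power2_eq_square)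
  show ?thesis
    unfolding msc_def by (simp add: field_simps) (use minus plus in algebra)
qed

lemma msc_holomorphic: "msc holomorphic_on {z. Im z > 0}"
  unfolding msc_def[abs_def]
  by (intro holomorphic_intros) (auto simp: complex_nonpos_Reals_iff)

lemma msc_has_field_derivative:
  "Im z > 0 \<Longrightarrow> (msc has_field_derivative deriv msc z) (at z)"
  by (rule holomorphic_derivI[OF msc_holomorphic open_halfspace_Im_gt]) simp

lemma isCont_deriv_msc:
  assumes "Im z > 0"
  shows "isCont (deriv msc) z"
proof -
  have "continuous_on {z. Im z > 0} (deriv msc)"
    by (intro holomorphic_on_imp_continuous_on holomorphic_deriv msc_holomorphic open_halfspace_Im_gt)
  then show ?thesis
    using assms open_halfspace_Im_gt continuous_on_eq_continuous_at by blast
qed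

lemma one_minus_sq_msc_nonzero:
  assumes "Im z \<noteq> 0"
  shows "1 - (complex_of_real u)\<^sup>2 * (msc z)\<^sup>2 \<noteq> 0"
proof
  assume "1 - (complex_of_real u)\<^sup>2 * (msc z)\<^sup>2 = 0"
  then have sq: "(complex_of_real u * msc z)\<^sup>2 = 1"
    by (simp add: power_mult_distrib)
  then have "complex_of_real u * msc z = 1 \<or> complex_of_real u * msc z = -1"
    by (simp add: power2_eq_1_iff)
  moreover have "u \<noteq> 0"
    using sq by auto
  ultimately have "msc z = complex_of_real (1 / u) \<or> msc z = complex_of_real (- 1 / u)"
    by (auto simp: field_simps)
  then have Im_m: "Im (msc z) = 0"
    by auto
  have "Re (msc z) * Im z = Im (msc z * (z - msc z))"
    using Im_m by simp
  then have "msc z = 0"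
    using assms Im_m by (simp add: msc_functional_eq complex_eq_iff)
  then show False
    using sq by simp
qed

lemma joukowski_polar:
  assumes "R \<noteq> 0"
  shows "complex_of_real R * cis t + inverse (complex_of_real R * cis t)
           = Complex ((R + 1 / R) * cos t) ((R - 1 / R) * sin t)"
proof -
  have "inverse (complex_of_real R * cis t) = complex_of_real (1 / R) * cis (- t)"
    by (simp add: divide_inverse)
  then show ?thesis
    by (simp add: complex_eq_iff algebra_simps)
qed

lemma msc_E_eta:
  assumes "\<eta> > 0" "-pi < t" "t < 0"
  shows "msc (Complex (E_eta \<eta> t) \<eta>) = complex_of_real (r_eta \<eta> t) * cis t"
proof -
  have s: "sin t < 0"
    using assms(2,3) by (rule sin_neg_of_neg_pi_lt)
  define R where "R = r_eta \<eta> t"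
  have R: "R > 0"
    using r_eta_pos[OF assms(1) s] by (simp add: R_def)
  define w where "w = complex_of_real R * cis t"
  define z where "z = Complex (E_eta \<eta> t) \<eta>"
  have E: "E_eta \<eta> t = (R + 1 / R) * cos t"
    by (simp add: E_eta_def R_def)
  have \<eta>: "(R - 1 / R) * sin t = \<eta>"
    using r_eta_minus_inverse[OF assms(1)] s by (simp add: R_def)
  have z: "z = w + inverse w"
    unfolding z_def w_def joukowski_polar[OF less_imp_neq[OF R, symmetric]] E \<eta> by (rule refl)
  have w_nz: "w \<noteq> 0"
    using R by (simp add: w_def)
  define m where "m = msc z"
  have "w * (z - w) = 1"
    using w_nz by (simp add: z)
  then have "(m - w) * (m - (z - w)) = - (m * (z - m)) + 1"
    by (simp add: algebra_simps)
  also have "\<dots> = 0"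
    by (simp add: m_def msc_functional_eq)
  finally have "m = w \<or> m = z - w"
    by simp
  moreover have "m \<noteq> z - w"
  proof
    assume "m = z - w"
    then have "csqrt (z - 2) * csqrt (z + 2) = 2 * w - z"
      by (simp add: m_def msc_def field_simps)
    then have "Im (csqrt (z - 2) * csqrt (z + 2)) = 2 * R * sin t - \<eta>"
      by (simp add: z_def w_def)
    moreover have "Im (csqrt (z - 2) * csqrt (z + 2)) > 0"
      using assms(1) by (intro Im_csqrt_product_pos) (simp add: z_def)
    moreover have "R * sin t < 0"
      using R s by (simp add: mult_pos_neg)
    ultimately show False
      using assms(1) by linarith
  qed
  ultimately have "m = w"
    by blast
  then show ?thesis
    unfolding m_def z_def w_def R_def .
qed

definition w_eta :: "real \<Rightarrow> real \<Rightarrow> real \<Rightarrow> complex" where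
  "w_eta u \<eta> t = 1 - (complex_of_real u)\<^sup>2 * (complex_of_real (r_eta \<eta> t))\<^sup>2
                      * exp (2 * \<i> * complex_of_real t)"

lemma w_eta_on_line:
  assumes "\<eta> > 0" "-pi < t" "t < 0"
  shows "w_eta u \<eta> t = 1 - (complex_of_real u)\<^sup>2 * (msc (Complex (E_eta \<eta> t) \<eta>))\<^sup>2"
proof -
  have "(cis t)\<^sup>2 = exp (2 * \<i> * complex_of_real t)"
    using exp_of_nat_mult[of 2 "\<i> * complex_of_real t"] by (simp add: cis_conv_exp mult_ac)
  then show ?thesis
    by (simp add: w_eta_def msc_E_eta[OF assms] power_mult_distrib)
qed

lemma w_eta_not_nonpos_Reals: "w_eta u \<eta> t \<notin> \<real>\<^sub>\<le>\<^sub>0"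
proof
  assume "w_eta u \<eta> t \<in> \<real>\<^sub>\<le>\<^sub>0"
  moreover define a where "a = u\<^sup>2 * (r_eta \<eta> t)\<^sup>2"
  moreover have "w_eta u \<eta> t = 1 - complex_of_real a * cis (2 * t)"
    by (simp add: w_eta_def a_def cis_conv_exp mult_ac)
  ultimately have re: "1 - a * cos (2 * t) \<le> 0" and im: "a * sin (2 * t) = 0"
    by (auto simp: complex_nonpos_Reals_iff)
  have "a \<noteq> 0"
    using re by auto
  then have "sin t \<noteq> 0"
    by (auto simp: a_def r_eta_def)
  with im \<open>a \<noteq> 0\<close> have "cos t = 0"
    by (simp add: sin_double)
  then have "cos (2 * t) = -1"
    by (simp add: cos_double_sin sin_squared_eq)
  moreover have "a \<ge> 0"
    by (simp add: a_def)
  ultimately show False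
    using re by simp
qed

lemma w_eta_C1_differentiable:
  assumes "\<eta> > 0"
  shows "w_eta u \<eta> C1_differentiable_on UNIV"
proof -
  define r' where "r' t = -2 * \<eta> * cos t / (sqrt_disc \<eta> t * (\<eta> + sqrt_disc \<eta> t))" for t
  have r: "(r_eta \<eta> has_real_derivative r' t) (at t)" for t
    unfolding r'_def by (rule r_eta_has_real_derivative[OF assms])
  have "continuous_on UNIV (sqrt_disc \<eta>)"
    by (intro continuous_at_imp_continuous_on ballI DERIV_isCont[OF sqrt_disc_has_real_derivative[OF assms]])
  then have cont_r': "continuous_on UNIV r'"
    unfolding r'_def using sqrt_disc_pos[OF assms] assms
    by (intro continuous_intros) (auto simp: add_pos_pos less_imp_neq[symmetric])
  have cont_r: "continuous_on UNIV (r_eta \<eta>)"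
    by (intro continuous_at_imp_continuous_on ballI DERIV_isCont[OF r])
  define D where "D t = - ((complex_of_real u)\<^sup>2 * (complex_of_real ((r_eta \<eta> t)\<^sup>2)
           * (exp (2 * \<i> * complex_of_real t) * (2 * \<i>))
         + complex_of_real (2 * r_eta \<eta> t * r' t) * exp (2 * \<i> * complex_of_real t)))" for t
  have "continuous_on UNIV D"
    unfolding D_def using cont_r cont_r' by (intro continuous_intros)
  moreover have "(w_eta u \<eta> has_vector_derivative D t) (at t)" for t
  proof -
    have w: "w_eta u \<eta> = (\<lambda>t. 1 - (complex_of_real u)\<^sup>2
               * (complex_of_real ((r_eta \<eta> t)\<^sup>2) * exp (2 * \<i> * complex_of_real t)))"
      by (simp add: w_eta_def[abs_def] mult.assoc)
    have r2: "((\<lambda>t. (r_eta \<eta> t)\<^sup>2) has_real_derivative 2 * r_eta \<eta> t * r' t) (at t)"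
      using DERIV_power[OF r, of 2 t] by (simp add: mult_ac)
    have e: "((\<lambda>t. exp (2 * \<i> * complex_of_real t)) has_vector_derivative
               exp (2 * \<i> * complex_of_real t) * (2 * \<i>)) (at t)"
      by (rule has_vector_derivative_real_field) (auto intro!: derivative_eq_intros)
    show ?thesis
      unfolding w
      by (rule has_vector_derivative_eq_rhs,
          (rule has_vector_derivative_diff has_vector_derivative_const has_vector_derivative_mult_right
            has_vector_derivative_mult has_vector_derivative_of_real r2 e)+) (simp add: D_def)
  qed
  ultimately show ?thesis
    unfolding C1_differentiable_on_def by blast
qed

lemma Arg_has_real_derivative:
  assumes w: "(w has_vector_derivative w') (at t)" and w_t: "w t \<notin> \<real>\<^sub>\<le>\<^sub>0"
  shows "((\<lambda>s. Arg (w s)) has_real_derivative Im (w' / w t)) (at t)"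
proof -
  have "((\<lambda>s. Ln (w s)) has_vector_derivative w' / w t) (at t)"
    using field_vector_diff_chain_at[OF w has_field_derivative_Ln[OF w_t]] by (simp add: o_def divide_inverse)
  then have Im_Ln: "((\<lambda>s. Im (Ln (w s))) has_real_derivative Im (w' / w t)) (at t)"
    by (rule has_field_derivative_Im)
  have ev: "\<forall>\<^sub>F s in nhds t. Arg (w s) = Im (Ln (w s))"
  proof -
    have "w t \<noteq> 0"
      using w_t by (auto simp: complex_nonpos_Reals_iff)
    then obtain e where "e > 0" and e: "\<And>s. dist t s < e \<Longrightarrow> w s \<noteq> 0"
      using continuous_at_avoid[OF has_vector_derivative_continuous[OF w], of 0] by auto
    then have "\<forall>s. dist s t < e \<longrightarrow> Arg (w s) = Im (Ln (w s))"
      by (simp add: Arg_eq_Im_Ln dist_commute)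
    with \<open>e > 0\<close> show ?thesis
      unfolding eventually_nhds_metric by blast
  qed
  show ?thesis
    by (rule DERIV_cong_ev[OF refl ev refl, THEN iffD2, OF Im_Ln])
qed

text \<open>\<open>log_kernel u \<eta> x\<close> is \<open>- Im (d/dz) log (1 - u\<^sup>2 m(z)\<^sup>2)\<close> at \<open>z = x + i \<eta>\<close>.\<close>
definition log_kernel :: "real \<Rightarrow> real \<Rightarrow> real \<Rightarrow> real" where
  "log_kernel u \<eta> x = Im (2 * (complex_of_real u)\<^sup>2 * msc (Complex x \<eta>) * deriv msc (Complex x \<eta>)
                          / (1 - (complex_of_real u)\<^sup>2 * (msc (Complex x \<eta>))\<^sup>2))"

lemma isCont_log_kernel:
  assumes "\<eta> > 0"
  shows "isCont (log_kernel u \<eta>) x"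
proof -
  have line: "isCont (\<lambda>x. Complex x \<eta>) x"
    unfolding Complex_eq by (intro continuous_intros)
  have m: "isCont (\<lambda>x. msc (Complex x \<eta>)) x"
    using assms by (intro isCont_o2[OF line] DERIV_isCont[OF msc_has_field_derivative]) simp
  have dm: "isCont (\<lambda>x. deriv msc (Complex x \<eta>)) x"
    using assms by (intro isCont_o2[OF line] isCont_deriv_msc) simp
  show ?thesis
    unfolding log_kernel_def[abs_def]
    by (intro isCont_Im continuous_intros m dm one_minus_sq_msc_nonzero) (use assms in simp)
qed

lemma has_real_derivative_Arg_w_eta:
  assumes "\<eta> > 0" "-pi < t" "t < 0"
  shows "((\<lambda>t. Arg (w_eta u \<eta> t)) has_real_derivative - dE_eta \<eta> t * log_kernel u \<eta> (E_eta \<eta> t)) (at t)"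
proof -
  define U where "U = (complex_of_real u)\<^sup>2"
  define \<gamma> where "\<gamma> = (\<lambda>s. Complex (E_eta \<eta> s) \<eta>)"
  define W where "W = (\<lambda>s. 1 - U * (msc (\<gamma> s))\<^sup>2)"
  have s: "sin t \<noteq> 0"
    using sin_neg_of_neg_pi_lt[OF assms(2,3)] by simp
  have \<gamma>_t: "Im (\<gamma> t) > 0"
    using assms(1) by (simp add: \<gamma>_def)
  have d\<gamma>: "(\<gamma> has_vector_derivative complex_of_real (dE_eta \<eta> t)) (at t)"
    using has_vector_derivative_add[OF has_vector_derivative_of_real[OF E_eta_has_real_derivative[OF assms(1) s]]
        has_vector_derivative_const[of "\<i> * complex_of_real \<eta>"]]
    by (simp add: \<gamma>_def Complex_eq)
  have dF: "((\<lambda>z. 1 - U * (msc z)\<^sup>2) has_field_derivative - (U * (2 * msc (\<gamma> t) * deriv msc (\<gamma> t))))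
              (at (\<gamma> t))"
    by (rule DERIV_cong[OF DERIV_diff[OF DERIV_const DERIV_cmult[OF DERIV_power[OF msc_has_field_derivative[OF \<gamma>_t]]]]])
       (simp add: mult_ac)
  have dW: "(W has_vector_derivative
              complex_of_real (dE_eta \<eta> t) * - (U * (2 * msc (\<gamma> t) * deriv msc (\<gamma> t)))) (at t)"
    using field_vector_diff_chain_at[OF d\<gamma> dF] unfolding W_def o_def .
  have W_eq: "W s = w_eta u \<eta> s" if "s \<in> {-pi<..<0}" for s
    using w_eta_on_line[OF assms(1)] that by (simp add: W_def U_def \<gamma>_def)
  have W_t: "W t \<notin> \<real>\<^sub>\<le>\<^sub>0"
    using W_eq[of t] assms w_eta_not_nonpos_Reals by simp
  have "((\<lambda>s. Arg (W s)) has_real_derivative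
        Im (complex_of_real (dE_eta \<eta> t) * - (U * (2 * msc (\<gamma> t) * deriv msc (\<gamma> t))) / W t)) (at t)"
    by (rule Arg_has_real_derivative[OF dW W_t])
  also have "complex_of_real (dE_eta \<eta> t) * - (U * (2 * msc (\<gamma> t) * deriv msc (\<gamma> t))) / W t
           = complex_of_real (- dE_eta \<eta> t) * (2 * U * msc (\<gamma> t) * deriv msc (\<gamma> t) / W t)"
    by (simp add: algebra_simps)
  also have "Im \<dots> = - dE_eta \<eta> t * log_kernel u \<eta> (E_eta \<eta> t)"
    unfolding log_kernel_def W_def U_def \<gamma>_def scaleR_conv_of_real[symmetric] scaleR_complex.sel ..
  finally show ?thesis
    by (rule has_field_derivative_transform_within_open[OF _ open_greaterThanLessThan])
       (use assms W_eq in auto)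
qed

lemma continuous_on_deriv_Arg_w_eta:
  assumes "\<eta> > 0"
  shows "continuous_on UNIV (deriv (\<lambda>t. Arg (w_eta u \<eta> t)))"
proof -
  obtain D where D: "\<And>t. (w_eta u \<eta> has_vector_derivative D t) (at t)" and D_cont: "continuous_on UNIV D"
    using w_eta_C1_differentiable[OF assms] unfolding C1_differentiable_on_def by blast
  have "deriv (\<lambda>t. Arg (w_eta u \<eta> t)) = (\<lambda>t. Im (D t / w_eta u \<eta> t))"
    by (intro ext DERIV_imp_deriv Arg_has_real_derivative D w_eta_not_nonpos_Reals)
  moreover have "continuous_on UNIV (w_eta u \<eta>)"
    by (intro continuous_at_imp_continuous_on ballI has_vector_derivative_continuous[OF D])
  moreover have "w_eta u \<eta> t \<noteq> 0" for t
    using w_eta_not_nonpos_Reals[of u \<eta> t] by (auto simp: complex_nonpos_Reals_iff)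
  ultimately show ?thesis
    using D_cont by (auto intro!: continuous_intros)
qed

lemma set_integrable_bounded_mult_continuous:
  fixes \<phi> k :: "real \<Rightarrow> real"
  assumes \<phi>: "continuous_on {a<..<b} \<phi>" and bound: "\<And>t. a < t \<Longrightarrow> t < b \<Longrightarrow> \<bar>\<phi> t\<bar> \<le> B"
    and k: "continuous_on {a..b} k"
  shows "set_integrable lborel {a<..<b} (\<lambda>t. \<phi> t * k t)"
proof (rule set_integrable_bound[where f = "\<lambda>t. B * k t"])
  have "set_integrable lborel {a..b} (\<lambda>t. B * k t)"
    unfolding set_integrable_def by (rule borel_integrable_compact) (auto intro!: continuous_intros k)
  then show "set_integrable lborel {a<..<b} (\<lambda>t. B * k t)"
    by (rule set_integrable_subset) auto
  have "continuous_on {a<..<b} k"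
    using k by (rule continuous_on_subset) auto
  with \<phi> have "continuous_on {a<..<b} (\<lambda>t. \<phi> t * k t)"
    by (rule continuous_on_mult)
  then show "set_borel_measurable lborel {a<..<b} (\<lambda>t. \<phi> t * k t)"
    unfolding set_borel_measurable_def measurable_lborel2
    by (intro borel_measurable_continuous_on_indicator) auto
  have "\<bar>\<phi> t\<bar> * \<bar>k t\<bar> \<le> \<bar>B\<bar> * \<bar>k t\<bar>" if "a < t" "t < b" for t
    using bound[OF that] by (intro mult_right_mono) auto
  then show "AE t in lborel. t \<in> {a<..<b} \<longrightarrow> norm (\<phi> t * k t) \<le> norm (B * k t)"
    by (auto simp: abs_mult)
qed

lemma lborel_integral_substitution:
  fixes f g g' :: "real \<Rightarrow> real" and a b :: real
  assumes "a < b"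
    and g: "\<And>t. a < t \<Longrightarrow> t < b \<Longrightarrow> (g has_real_derivative g' t) (at t)"
    and g'_cont: "\<And>t. a < t \<Longrightarrow> t < b \<Longrightarrow> isCont g' t"
    and g'_nonneg: "\<And>t. a \<le> t \<Longrightarrow> t \<le> b \<Longrightarrow> g' t \<ge> 0"
    and bot: "filterlim g at_bot (at_right a)" and top: "filterlim g at_top (at_left b)"
    and f: "continuous_on UNIV f"
    and integrable: "set_integrable lborel {a<..<b} (\<lambda>t. g' t * f (g t))"
  shows "(\<integral>x. f x \<partial>lborel) = (LBINT t=a..b. g' t * f (g t))"
proof -
  have A: "((ereal \<circ> g \<circ> real_of_ereal) \<longlongrightarrow> - \<infinity>) (at_right (ereal a))"
    using bot by (simp add: ereal_tendsto_simps)
  have B: "((ereal \<circ> g \<circ> real_of_ereal) \<longlongrightarrow> \<infinity>) (at_left (ereal b))"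
    using top by (simp add: ereal_tendsto_simps)
  have f_cont: "isCont f x" for x
    using f by (simp add: continuous_on_eq_continuous_at)
  have ab: "ereal a < ereal b"
    using \<open>a < b\<close> by simp
  have g_e: "(g has_real_derivative g' t) (at t)" if "ereal a < ereal t" "ereal t < ereal b" for t
    using g that by simp
  have g'_cont_e: "isCont g' t" if "ereal a < ereal t" "ereal t < ereal b" for t
    using g'_cont that by simp
  have g'_nonneg_e: "g' t \<ge> 0" if "ereal a \<le> ereal t" "ereal t \<le> ereal b" for t
    using g'_nonneg that by simp
  have "set_integrable lborel {a<..<b} (\<lambda>t. \<bar>g' t * f (g t)\<bar>)
          = set_integrable lborel {a<..<b} (\<lambda>t. \<bar>f (g t)\<bar> * g' t)"
    using g'_nonneg by (intro set_integrable_cong) (auto simp: abs_mult)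
  with set_integrable_abs[OF integrable]
  have abs_integrable: "set_integrable lborel (einterval a b) (\<lambda>t. \<bar>f (g t)\<bar> * g' t)"
    by simp
  have "set_integrable lborel (einterval (-\<infinity>) \<infinity>) (\<lambda>x. \<bar>f x\<bar>)"
    by (rule interval_integral_substitution_nonneg(1)[OF ab g_e _ g'_cont_e _ g'_nonneg_e A B abs_integrable])
       (simp_all add: continuous_intros f_cont)
  then have "set_integrable lborel (einterval (-\<infinity>) \<infinity>) f"
    using set_integrable_abs_iff'[of f lborel "einterval (-\<infinity>) \<infinity>"] f
    by (simp add: borel_measurable_continuous_onI)
  then have "(LBINT x=-\<infinity>..\<infinity>. f x) = (LBINT t=a..b. g' t *\<^sub>R f (g t))"
    using integrable
    by (intro interval_integral_substitution_integrable[OF ab g_e _ g'_cont_e g'_nonneg_e A B]) (simp_all add: f_cont)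
  then show ?thesis
    by (simp add: interval_lebesgue_integral_def set_lebesgue_integral_def)
qed

lemma set_integrable_substituted_log_kernel:
  fixes \<psi> :: "real \<Rightarrow> real"
  assumes \<psi>: "continuous_on UNIV \<psi>" and B: "\<And>x. \<bar>\<psi> x\<bar> \<le> B" and \<eta>: "\<eta> > 0"
  shows "set_integrable lborel {-pi<..<0}
           (\<lambda>t. dE_eta \<eta> t * (log_kernel u \<eta> (E_eta \<eta> t) * \<psi> (E_eta \<eta> t)))"
proof -
  define h where "h = (\<lambda>t. Arg (w_eta u \<eta> t))"
  have "isCont (\<lambda>t. \<psi> (E_eta \<eta> t)) t" if "t \<in> {-pi<..<0}" for t
    using that \<psi> sin_neg_of_neg_pi_lt[of t]
    by (intro isCont_o2[OF DERIV_isCont[OF E_eta_has_real_derivative[OF \<eta>]]])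
       (auto simp: continuous_on_eq_continuous_at)
  then have \<psi>E: "continuous_on {-pi<..<0} (\<lambda>t. \<psi> (E_eta \<eta> t))"
    by (intro continuous_at_imp_continuous_on ballI)
  have "continuous_on {-pi..0} (deriv h)"
    using continuous_on_deriv_Arg_w_eta[OF \<eta>, of u] unfolding h_def[symmetric] by (rule continuous_on_subset) simp
  then have "set_integrable lborel {-pi<..<0} (\<lambda>t. \<psi> (E_eta \<eta> t) * deriv h t)"
    by (rule set_integrable_bounded_mult_continuous[OF \<psi>E B])
  moreover have "set_integrable lborel {-pi<..<0} (\<lambda>t. \<psi> (E_eta \<eta> t) * deriv h t)
      = set_integrable lborel {-pi<..<0}
          (\<lambda>t. -1 * (dE_eta \<eta> t * (log_kernel u \<eta> (E_eta \<eta> t) * \<psi> (E_eta \<eta> t))))"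
    unfolding h_def
    by (intro set_integrable_cong) (auto simp: DERIV_imp_deriv[OF has_real_derivative_Arg_w_eta[OF \<eta>]])
  ultimately show ?thesis
    by (simp only: set_integrable_mult_right_iff[of "-1"])
qed

theorem lemma5p1:
  fixes \<psi> :: "real \<Rightarrow> real" and u \<eta> :: real
  assumes "continuous_on UNIV \<psi>" and "bounded (range \<psi>)"
    and "u > 0" and "\<eta> > 0"
  shows "(\<integral>x. (1 / pi) * Im (2 * (complex_of_real u)\<^sup>2 * msc (Complex x \<eta>) * deriv msc (Complex x \<eta>)
            / (1 - (complex_of_real u)\<^sup>2 * (msc (Complex x \<eta>))\<^sup>2)) * \<psi> x \<partial>lborel)
       = - (1 / pi) * (LBINT \<theta>=-pi..0. \<psi> (E_eta \<eta> \<theta>) *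
            deriv (\<lambda>t. Arg (1 - (complex_of_real u)\<^sup>2 * (complex_of_real (r_eta \<eta> t))\<^sup>2
                               * exp (2 * \<i> * complex_of_real t))) \<theta>)"
proof -
  note \<eta> = \<open>\<eta> > 0\<close>
  define f where "f = (\<lambda>x. log_kernel u \<eta> x * \<psi> x)"
  obtain B where B: "\<And>x. \<bar>\<psi> x\<bar> \<le> B"
    using assms(2) unfolding bounded_iff by auto
  have "continuous_on UNIV f"
    using assms(1) unfolding f_def continuous_on_eq_continuous_at[OF open_UNIV]
    by (auto intro!: isCont_mult isCont_log_kernel \<eta>)
  then have "(\<integral>x. f x \<partial>lborel) = (LBINT t=-pi..0. dE_eta \<eta> t * f (E_eta \<eta> t))"
    unfolding zero_ereal_def f_def
    by (intro lborel_integral_substitution[OF _ E_eta_has_real_derivative[OF \<eta>] isCont_dE_eta[OF \<eta>]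
          dE_eta_nonneg[OF \<eta>] E_eta_tendsto_bot[OF \<eta>] E_eta_tendsto_top[OF \<eta>]]
          set_integrable_substituted_log_kernel[OF assms(1) B \<eta>])
       (auto dest: sin_neg_of_neg_pi_lt)
  also have "\<dots> = - (LBINT t=-pi..0. \<psi> (E_eta \<eta> t) * deriv (\<lambda>t. Arg (w_eta u \<eta> t)) t)"
    by (subst interval_lebesgue_integral_uminus[symmetric], rule interval_integral_cong)
       (auto simp: einterval_iff f_def DERIV_imp_deriv[OF has_real_derivative_Arg_w_eta[OF \<eta>]])
  finally show ?thesis
    unfolding w_eta_def f_def log_kernel_def by (simp add: mult.assoc)
qed

end
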